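(* Let $\mathbb F$ be a field of characteristic $2$, let $m\ge1$, and let $\mathfrak h_m$ be the Heisenberg Lie algebra over $\mathbb F$ with basis $e_1,\dots,e_{2m+1}$ and only nonzero brackets $[e_i,e_{m+i}]=-[e_{m+i},e_i]=e_{2m+1}$ for $1\le i\le m$. For $\lambda=(\lambda_1,\dots,\lambda_{2m+1})\in\mathbb F^{2m+1}$ let $\mathfrak h_m^\lambda(2)$ denote $\mathfrak h_m$ with the restricted structure given by the $[2]$-operator $$\left(\sum_{i=1}^{2m+1}a_ie_i\right)^{[2]}=\left(\sum_{i=1}^{2m+1}a_i^2\lambda_i+\sum_{j=1}^{m}a_ja_{m+j}\right)e_{2m+1}$$ (i.e. the unique $[2]$-operator with $e_i^{[2]}=\lambda_ie_{2m+1}$). Let $\lambda,\lambda'\in\mathbb F^{2m+1}$. Then $\mathfrak h_m^\lambda(2)$ and $\mathfrak h_m^{\lambda'}(2)$ are isomorphic as restricted Lie algebras if and only if there exist an invertible matrix $A\in\mathbb F^{2m\times2m}$, a vector $k=(k_1,\dots,k_{2m})\in\mathbb F^{2m}$ and a scalar $\mu\in\mathbb F$ with $(\det A)^2=\mu^{2m}$ such that (1) $A\begin{pmatrix}0&I_m\\-I_m&0\end{pmatrix}A^{t}=\mu\begin{pmatrix}0&I_m\\-I_m&0\end{pmatrix}$; (2') for every row vector $a=(a_1,\dots,a_{2m})\in\mathbb F^{2m}$, $$\mu\, a\Big(\sum_{i=1}^{2m}\lambda_iE_{ii}\Big)a^{T}+\mu\, a_{\mathrm I}a_{\mathrm{II}}^{T}=aA\Big(\sum_{i=1}^{2m}\lambda'_iE_{ii}\Big)(aA)^{T}+(aA)_{\mathrm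 I}(aA)_{\mathrm{II}}^{T}+\lambda'_{2m+1}(ak^{T})^2;$$ (3) $\lambda_{2m+1}=\mu\,\lambda'_{2m+1}$.
   Context: For $a=(a_1,\dots,a_{2m})\in\mathbb F^{2m}$, $a_{\mathrm I}=(a_1,\dots,a_m)$ and $a_{\mathrm{II}}=(a_{m+1},\dots,a_{2m})$. $E_{ii}$ is the $2m\times2m$ matrix with a single nonzero entry $1$ in position $(i,i)$. $I_m$ is the $m\times m$ identity matrix, and $^t$, $^T$ denote transpose. A restricted Lie algebra isomorphism is a Lie algebra isomorphism $\Psi$ with $\Psi(g^{[2]})=\Psi(g)^{[2]'}$ for all $g$. *)

theory Defs
  imports "Jordan_Normal_Form.Determinant"
begin

text \<open>The Heisenberg Lie algebra h_m is modelled on carrier_vec (2*m+1); coordinate i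
  (0-based) corresponds to the basis vector e_(i+1) of the paper, so e_(2m+1) is
  unit_vec (2*m+1) (2*m).\<close>

definition heis_bracket :: "nat \<Rightarrow> 'a::field vec \<Rightarrow> 'a vec \<Rightarrow> 'a vec" where
  "heis_bracket m x y =
     (\<Sum>i<m. x $ i * y $ (m + i) - x $ (m + i) * y $ i) \<cdot>\<^sub>v unit_vec (2*m+1) (2*m)"

definition heis_sq :: "nat \<Rightarrow> 'a::field vec \<Rightarrow> 'a vec \<Rightarrow> 'a vec" where
  "heis_sq m lam x =
     ((\<Sum>i<2*m+1. x $ i ^ 2 * lam $ i) + (\<Sum>j<m. x $ j * x $ (m + j)))
       \<cdot>\<^sub>v unit_vec (2*m+1) (2*m)"

definition restricted_iso :: "nat \<Rightarrow> 'a::field vec \<Rightarrow> 'a vec \<Rightarrow> ('a vec \<Rightarrow> 'a vec) \<Rightarrow> bool" where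
  "restricted_iso m lam lam' \<Psi> \<longleftrightarrow>
     bij_betw \<Psi> (carrier_vec (2*m+1)) (carrier_vec (2*m+1)) \<and>
     (\<forall>x\<in>carrier_vec (2*m+1). \<forall>y\<in>carrier_vec (2*m+1). \<Psi> (x + y) = \<Psi> x + \<Psi> y) \<and>
     (\<forall>c. \<forall>x\<in>carrier_vec (2*m+1). \<Psi> (c \<cdot>\<^sub>v x) = c \<cdot>\<^sub>v \<Psi> x) \<and>
     (\<forall>x\<in>carrier_vec (2*m+1). \<forall>y\<in>carrier_vec (2*m+1).
        \<Psi> (heis_bracket m x y) = heis_bracket m (\<Psi> x) (\<Psi> y)) \<and>
     (\<forall>x\<in>carrier_vec (2*m+1). \<Psi> (heis_sq m lam x) = heis_sq m lam' (\<Psi> x))"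

definition restricted_isomorphic :: "nat \<Rightarrow> 'a::field vec \<Rightarrow> 'a vec \<Rightarrow> bool" where
  "restricted_isomorphic m lam lam' \<longleftrightarrow> (\<exists>\<Psi>. restricted_iso m lam lam' \<Psi>)"

definition symp_J :: "nat \<Rightarrow> 'a::field mat" where
  "symp_J m = four_block_mat (0\<^sub>m m m) (1\<^sub>m m) (- 1\<^sub>m m) (0\<^sub>m m m)"

definition diag_lam :: "nat \<Rightarrow> 'a::field vec \<Rightarrow> 'a mat" where
  "diag_lam m lam = mat (2*m) (2*m) (\<lambda>(i,j). if i = j then lam $ i else 0)"

end

theory Submission
  imports Defs
begin

text \<open>
  Write elements of \<open>h_m\<close> as \<open>(a, t)\<close> with \<open>a \<in> F\<^sup>2\<^sup>m\<close>. A restricted isomorphism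
  \<open>\<Psi>\<close> maps the centre \<open>F e_(2m+1)\<close> onto itself, so \<open>\<Psi> e_(2m+1) = \<mu> e_(2m+1)\<close> with
  \<open>\<mu> \<noteq> 0\<close>, and \<open>\<Psi>\<close> is the block map \<open>(a, t) \<mapsto> (A\<^sup>T a, a \<bullet> k + \<mu> t)\<close>.
  Such a map preserves the bracket \<open>[x, y] = \<omega>(a, b) e_(2m+1)\<close>, \<open>\<omega>\<close> the standard
  symplectic form, iff \<open>A J A\<^sup>T = \<mu> J\<close>, which forces \<open>(det A)\<^sup>2 = \<mu>\<^sup>2\<^sup>m\<close> since
  \<open>det J = 1\<close>. Writing \<open>Q\<close>, \<open>Q'\<close> for the quadratic forms of (2'), it preserves the
  \<open>[2]\<close>-operator iff \<open>\<mu> (Q(a) + \<lambda>\<^sub>2\<^sub>m\<^sub>+\<^sub>1 t\<^sup>2) = Q'(A\<^sup>T a) + \<lambda>'\<^sub>2\<^sub>m\<^sub>+\<^sub>1 (a \<bullet> k + \<mu> t)\<^sup>2\<close>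
  for all \<open>(a, t)\<close>; in characteristic 2 the square on the right is
  \<open>(a \<bullet> k)\<^sup>2 + \<mu>\<^sup>2 t\<^sup>2\<close>, so the identity splits into its \<open>t\<close>-free part, condition (2'), and
  its \<open>t\<^sup>2\<close>-coefficient, condition (3). Conversely, a block map with \<open>A\<close> invertible and
  \<open>\<mu> \<noteq> 0\<close> is bijective, its inverse being again a block map.
\<close>

lemma power2_sum_char_2:
  assumes "CHAR('a::comm_ring_1) = 2"
  shows "(x + y)^2 = x^2 + (y::'a)^2"
proof -
  have "(2::'a) = 0" using of_nat_CHAR[where 'a='a] assms by simp
  then show ?thesis by (simp add: power2_sum)
qed

lemma vec_first_append [simp]: "v \<in> carrier_vec n \<Longrightarrow> vec_first (v @\<^sub>v w) n = v"
  by (intro eq_vecI) (auto simp: vec_first_def)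

lemma ball_carrier_vec_split_last:
  "(\<forall>x\<in>carrier_vec (n+1). P (vec_first x n) (x $ n)) \<longleftrightarrow> (\<forall>a\<in>carrier_vec n. \<forall>t. P a t)"
  (is "?lhs \<longleftrightarrow> ?rhs")
proof
  assume P: ?lhs
  show ?rhs
  proof (intro ballI allI)
    fix a :: "'a vec" and t :: 'a
    assume a: "a \<in> carrier_vec n"
    have "a @\<^sub>v vec 1 (\<lambda>_. t) \<in> carrier_vec (n+1)" by (rule append_carrier_vec[OF a]) simp
    then show "P a t" using P a by fastforce
  qed
qed auto

lemma smult_unit_vec_eq_iff:
  assumes "i < n"
  shows "c \<cdot>\<^sub>v unit_vec n i = d \<cdot>\<^sub>v unit_vec n i \<longleftrightarrow> (c::'a::semiring_1) = d"
proof
  assume "c \<cdot>\<^sub>v unit_vec n i = d \<cdot>\<^sub>v unit_vec n i"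
  then have "(c \<cdot>\<^sub>v unit_vec n i) $ i = (d \<cdot>\<^sub>v unit_vec n i) $ i" by simp
  then show "c = d" using assms by simp
qed simp

lemma smult_mat_mult_mat_vec:
  "(M :: 'a::comm_semiring_0 mat) \<in> carrier_mat nr nc \<Longrightarrow> v \<in> carrier_vec nc \<Longrightarrow>
    (c \<cdot>\<^sub>m M) *\<^sub>v v = c \<cdot>\<^sub>v (M *\<^sub>v v)"
  by (intro eq_vecI) (auto intro!: scalar_prod_smult_left)

lemma mult_mat_vec_zero: "A \<in> carrier_mat nr nc \<Longrightarrow> A *\<^sub>v 0\<^sub>v nc = 0\<^sub>v nr"
  by (intro eq_vecI) auto

lemma mat_eqI_scalar_prod:
  assumes M: "(M :: 'a::comm_semiring_1 mat) \<in> carrier_mat n n" and N: "N \<in> carrier_mat n n"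
    and eq: "\<And>a b. a \<in> carrier_vec n \<Longrightarrow> b \<in> carrier_vec n \<Longrightarrow> a \<bullet> (M *\<^sub>v b) = a \<bullet> (N *\<^sub>v b)"
  shows "M = N"
proof (rule eq_matI)
  fix i j assume "i < dim_row N" "j < dim_col N"
  then have i: "i < n" and j: "j < n" using N by auto
  have "unit_vec n i \<bullet> (M *\<^sub>v unit_vec n j) = unit_vec n i \<bullet> (N *\<^sub>v unit_vec n j)"
    by (rule eq) auto
  then show "M $$ (i, j) = N $$ (i, j)" using M N i j by simp
qed (use M N in auto)

lemma invertible_matE:
  assumes A: "A \<in> carrier_mat n n" and "invertible_mat A"
  obtains B where "B \<in> carrier_mat n n" "A * B = 1\<^sub>m n" "B * A = 1\<^sub>m n"
proof -
  from assms obtain B where AB: "A * B = 1\<^sub>m n" and BA: "B * A = 1\<^sub>m (dim_row B)"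
    unfolding invertible_mat_def inverts_mat_def by auto
  have "dim_col B = n" using arg_cong[OF AB, of dim_col] by simp
  moreover have "dim_row B = n" using arg_cong[OF BA, of dim_col] A by simp
  ultimately show ?thesis using that AB BA by auto
qed

lemma invertible_mat_iff_det_nonzero:
  assumes A: "A \<in> carrier_mat n n"
  shows "invertible_mat A \<longleftrightarrow> det A \<noteq> (0::'a::field)"
proof
  assume "invertible_mat A"
  then obtain B where B: "B \<in> carrier_mat n n" and "A * B = 1\<^sub>m n"
    using A by (auto elim: invertible_matE)
  then have "det A * det B = 1" using det_mult[OF A B] by simp
  then show "det A \<noteq> 0" by auto
next
  assume "det A \<noteq> 0"
  then have "A \<in> Units (ring_mat TYPE('a) n ())" by (rule det_non_zero_imp_unit[OF A])
  then show "invertible_mat A"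
    using A unfolding Units_def ring_mat_def invertible_mat_def inverts_mat_def by auto
qed

lemma linear_map_vec_expansion:
  fixes f :: "'a::comm_semiring_1 vec \<Rightarrow> 'a vec"
  assumes add: "\<forall>x\<in>carrier_vec n. \<forall>y\<in>carrier_vec n. f (x + y) = f x + f y"
    and smult: "\<forall>c. \<forall>x\<in>carrier_vec n. f (c \<cdot>\<^sub>v x) = c \<cdot>\<^sub>v f x"
    and carrier: "\<forall>x\<in>carrier_vec n. f x \<in> carrier_vec n'"
    and x: "x \<in> carrier_vec n"
  shows "f x = vec n' (\<lambda>j. \<Sum>i<n. x $ i * f (unit_vec n i) $ j)"
proof -
  have prefix: "f (vec n (\<lambda>i. if i < t then x $ i else 0))
      = vec n' (\<lambda>j. \<Sum>i<t. x $ i * f (unit_vec n i) $ j)" if "t \<le> n" for t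
    using that
  proof (induction t)
    case 0
    have "vec n (\<lambda>i. if i < 0 then x $ i else 0) = 0 \<cdot>\<^sub>v 0\<^sub>v n" by (intro eq_vecI) auto
    then have "f (vec n (\<lambda>i. if i < 0 then x $ i else 0)) = 0 \<cdot>\<^sub>v f (0\<^sub>v n)" using smult by simp
    also have "\<dots> = vec n' (\<lambda>j. \<Sum>i<0. x $ i * f (unit_vec n i) $ j)"
    proof -
      have "f (0\<^sub>v n) \<in> carrier_vec n'" using carrier by simp
      then show ?thesis by (intro eq_vecI) auto
    qed
    finally show ?case .
  next
    case (Suc t)
    have IH: "f (vec n (\<lambda>i. if i < t then x $ i else 0))
        = vec n' (\<lambda>j. \<Sum>i<t. x $ i * f (unit_vec n i) $ j)"
      using Suc by simp
    have c: "f (unit_vec n t) \<in> carrier_vec n'" using carrier Suc.prems by simp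
    have "vec n (\<lambda>i. if i < Suc t then x $ i else 0)
        = vec n (\<lambda>i. if i < t then x $ i else 0) + x $ t \<cdot>\<^sub>v unit_vec n t"
      using Suc.prems by (intro eq_vecI) (auto simp: less_Suc_eq)
    then have "f (vec n (\<lambda>i. if i < Suc t then x $ i else 0))
        = f (vec n (\<lambda>i. if i < t then x $ i else 0)) + x $ t \<cdot>\<^sub>v f (unit_vec n t)"
      using add smult by auto
    also have "\<dots> = vec n' (\<lambda>j. \<Sum>i<Suc t. x $ i * f (unit_vec n i) $ j)"
      unfolding IH using c by (intro eq_vecI) auto
    finally show ?case .
  qed
  have "vec n (\<lambda>i. if i < n then x $ i else 0) = x" using x by (intro eq_vecI) auto
  then show ?thesis using prefix[of n] by simp
qed

section \<open>The symplectic and quadratic forms of \<open>h_m\<close>\<close>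

definition symp_form :: "nat \<Rightarrow> 'a::field vec \<Rightarrow> 'a vec \<Rightarrow> 'a" where
  "symp_form m x y = (\<Sum>i<m. x $ i * y $ (m + i) - x $ (m + i) * y $ i)"

lemma heis_bracket_eq: "heis_bracket m x y = symp_form m x y \<cdot>\<^sub>v unit_vec (2*m+1) (2*m)"
  unfolding heis_bracket_def symp_form_def ..

lemma symp_form_vec_first: "symp_form m x y = symp_form m (vec_first x (2*m)) (vec_first y (2*m))"
  unfolding symp_form_def vec_first_def by (intro sum.cong) auto

lemma symp_form_unit_vec_right:
  assumes "j < 2*m" "2*m \<le> n"
  shows "symp_form m x (unit_vec n j) = (if j < m then - x $ (m + j) else x $ (j - m))"
proof (cases "j < m")
  case True
  then show ?thesis using assms
    by (auto simp: symp_form_def sum_subtractf sum_negf if_distrib[of "\<lambda>t. _ * t"] sum.delta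
        cong: if_cong)
next
  case False
  then have "(\<Sum>i<m. x $ i * unit_vec n j $ (m + i)) = (\<Sum>i<m. if i = j - m then x $ i else 0)"
    using assms by (intro sum.cong) auto
  moreover have "(\<Sum>i<m. x $ (m + i) * unit_vec n j $ i) = 0"
    using False assms by (intro sum.neutral) auto
  ultimately show ?thesis using False assms by (simp add: symp_form_def sum_subtractf)
qed

lemma symp_form_nondegenerate:
  assumes "2*m \<le> n" and orth: "\<And>j. j < 2*m \<Longrightarrow> symp_form m w (unit_vec n j) = 0"
    and i: "i < 2*m"
  shows "w $ i = 0"
proof (cases "i < m")
  case True
  then have "symp_form m w (unit_vec n (i + m)) = w $ i"
    using symp_form_unit_vec_right[of "i + m" m n w] assms(1) by simp
  then show ?thesis using orth[of "i + m"] True by simp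
next
  case False
  then have "i - m < m" "m + (i - m) = i" using i by auto
  then have "symp_form m w (unit_vec n (i - m)) = - w $ i"
    using symp_form_unit_vec_right[of "i - m" m n w] assms(1) by simp
  then show ?thesis using orth[of "i - m"] False i by simp
qed

lemma symp_J_carrier: "symp_J m \<in> carrier_mat (2*m) (2*m)"
  unfolding symp_J_def by (simp add: mult_2)

lemma dim_symp_J [simp]: "dim_row (symp_J m) = 2*m" "dim_col (symp_J m) = 2*m"
  using symp_J_carrier by auto

lemma scalar_prod_symp_J:
  assumes a: "a \<in> carrier_vec (2*m)" and b: "b \<in> carrier_vec (2*m)"
  shows "a \<bullet> (symp_J m *\<^sub>v b) = symp_form m a b"
proof -
  let ?a1 = "vec_first a m" and ?a2 = "vec_last a m"
    and ?b1 = "vec_first b m" and ?b2 = "vec_last b m"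
  have split: "a = ?a1 @\<^sub>v ?a2" "b = ?b1 @\<^sub>v ?b2" using a b by (simp_all add: mult_2)
  have "symp_J m *\<^sub>v b = ?b2 @\<^sub>v (- ?b1)"
    unfolding symp_J_def by (subst split(2), subst four_block_mat_mult_vec) auto
  then have "a \<bullet> (symp_J m *\<^sub>v b) = ?a1 \<bullet> ?b2 + ?a2 \<bullet> (- ?b1)"
    by (subst split(1)) (simp add: scalar_prod_append[of _ m _ m])
  also have "\<dots> = symp_form m a b"
    using a b by (simp add: symp_form_def scalar_prod_def vec_first_def vec_last_def sum_subtractf
        atLeast0LessThan sum_negf mult_2 algebra_simps)
  finally show ?thesis .
qed

lemma det_symp_J: "det (symp_J m :: 'a::field mat) = 1"
proof -
  have "0\<^sub>m m m - - 1\<^sub>m m = (1\<^sub>m m :: 'a mat)" by (intro eq_matI) auto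
  then show ?thesis unfolding symp_J_def by (subst det_four_block_mat[of _ m]) auto
qed

lemma det_power2_if_conformally_symplectic:
  assumes A: "A \<in> carrier_mat (2*m) (2*m)"
    and AJ: "A * symp_J m * transpose_mat A = \<mu> \<cdot>\<^sub>m symp_J m"
  shows "(det A)^2 = (\<mu>::'a::field)^(2*m)"
proof -
  note J = symp_J_carrier[of m]
  have "det (A * symp_J m * transpose_mat A) = det A * det (symp_J m) * det A"
    using det_mult[OF mult_carrier_mat[OF A J], of "transpose_mat A"] det_mult[OF A J]
      det_transpose[OF A] A
    by simp
  then show ?thesis using AJ J by (simp add: det_symp_J power2_eq_square)
qed

definition quad_form :: "nat \<Rightarrow> 'a::field vec \<Rightarrow> 'a vec \<Rightarrow> 'a" where
  "quad_form m lam a = a \<bullet> (diag_lam m lam *\<^sub>v a) + vec_first a m \<bullet> vec_last a m"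

lemma quad_form_zero [simp]: "quad_form m lam (0\<^sub>v (2*m)) = 0"
  unfolding quad_form_def diag_lam_def by (simp add: scalar_prod_def vec_first_def vec_last_def)

lemma heis_sq_eq:
  "heis_sq m lam x =
     (quad_form m lam (vec_first x (2*m)) + lam $ (2*m) * x $ (2*m) ^ 2) \<cdot>\<^sub>v unit_vec (2*m+1) (2*m)"
proof -
  let ?a = "vec_first x (2*m)"
  have "diag_lam m lam *\<^sub>v ?a = vec (2*m) (\<lambda>i. lam $ i * x $ i)"
    by (intro eq_vecI)
      (auto simp: diag_lam_def scalar_prod_def vec_first_def if_distrib[of "\<lambda>t. t * _"] sum.delta
        cong: if_cong)
  then have "?a \<bullet> (diag_lam m lam *\<^sub>v ?a) = (\<Sum>i<2*m. x $ i ^ 2 * lam $ i)"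
    by (auto simp: scalar_prod_def vec_first_def atLeast0LessThan power2_eq_square ac_simps)
  moreover have "vec_first ?a m \<bullet> vec_last ?a m = (\<Sum>j<m. x $ j * x $ (m + j))"
    by (auto simp: scalar_prod_def vec_first_def vec_last_def atLeast0LessThan mult_2 intro!: sum.cong)
  ultimately show ?thesis
    unfolding heis_sq_def quad_form_def by (simp add: ac_simps)
qed

definition quad_form_compatible ::
    "nat \<Rightarrow> 'a::field vec \<Rightarrow> 'a vec \<Rightarrow> 'a mat \<Rightarrow> 'a vec \<Rightarrow> 'a \<Rightarrow> bool" where
  "quad_form_compatible m lam lam' A k \<mu> \<longleftrightarrow>
     (\<forall>a\<in>carrier_vec (2*m).
        \<mu> * quad_form m lam a = quad_form m lam' (transpose_mat A *\<^sub>v a) + lam' $ (2*m) * (a \<bullet> k)^2)"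

section \<open>Block maps\<close>

text \<open>The linear map of \<open>h_m\<close> with \<open>e_i \<mapsto> \<Sum>\<^sub>j A\<^sub>i\<^sub>j e_j + k\<^sub>i e_(2m+1)\<close> for
  \<open>i \<le> 2m\<close> and \<open>e_(2m+1) \<mapsto> \<mu> e_(2m+1)\<close>.\<close>
definition heis_map :: "nat \<Rightarrow> 'a::field mat \<Rightarrow> 'a vec \<Rightarrow> 'a \<Rightarrow> 'a vec \<Rightarrow> 'a vec" where
  "heis_map m A k \<mu> x =
     transpose_mat A *\<^sub>v vec_first x (2*m) @\<^sub>v vec 1 (\<lambda>_. vec_first x (2*m) \<bullet> k + \<mu> * x $ (2*m))"

lemma heis_vec_eqI:
  assumes "x \<in> carrier_vec (2*m+1)" "y \<in> carrier_vec (2*m+1)"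
    and "vec_first x (2*m) = vec_first y (2*m)" "x $ (2*m) = y $ (2*m)"
  shows "x = y"
proof (rule eq_vecI)
  fix i assume "i < dim_vec y"
  then have "i < 2*m \<or> i = 2*m" using assms(2) by auto
  then show "x $ i = y $ i"
    using assms(4) arg_cong[OF assms(3), of "\<lambda>v. v $ i"] by (auto simp: vec_first_def)
qed (use assms in auto)

lemma dim_heis_map [simp]: "dim_vec (heis_map m A k \<mu> x) = dim_col A + 1"
  unfolding heis_map_def by simp

lemma heis_map_carrier:
  "A \<in> carrier_mat (2*m) (2*m) \<Longrightarrow> heis_map m A k \<mu> x \<in> carrier_vec (2*m+1)"
  unfolding heis_map_def by (intro carrier_vecI) simp

lemma vec_first_heis_map [simp]:
  "A \<in> carrier_mat (2*m) (2*m) \<Longrightarrow>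
    vec_first (heis_map m A k \<mu> x) (2*m) = transpose_mat A *\<^sub>v vec_first x (2*m)"
  unfolding heis_map_def by (rule vec_first_append) simp

lemma heis_map_last [simp]:
  "A \<in> carrier_mat (2*m) (2*m) \<Longrightarrow>
    heis_map m A k \<mu> x $ (2*m) = vec_first x (2*m) \<bullet> k + \<mu> * x $ (2*m)"
  unfolding heis_map_def by simp

lemma heis_map_add:
  assumes A: "A \<in> carrier_mat (2*m) (2*m)" and k: "k \<in> carrier_vec (2*m)"
    and x: "x \<in> carrier_vec (2*m+1)" and y: "y \<in> carrier_vec (2*m+1)"
  shows "heis_map m A k \<mu> (x + y) = heis_map m A k \<mu> x + heis_map m A k \<mu> y"
proof (rule heis_vec_eqI[where m = m])
  let ?a = "vec_first x (2*m)" and ?b = "vec_first y (2*m)"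
  have first: "vec_first (u + v) (2*m) = vec_first u (2*m) + vec_first v (2*m)"
    if "v \<in> carrier_vec (2*m+1)" for u v :: "'a vec"
    using that by (intro eq_vecI) (auto simp: vec_first_def)
  show "vec_first (heis_map m A k \<mu> (x + y)) (2*m)
      = vec_first (heis_map m A k \<mu> x + heis_map m A k \<mu> y) (2*m)"
    using A y first[of y x] first[OF heis_map_carrier[OF A], of "heis_map m A k \<mu> x"]
    by (simp add: mult_add_distrib_mat_vec[of _ "2*m" "2*m"])
  have "heis_map m A k \<mu> (x + y) $ (2*m) = (?a + ?b) \<bullet> k + \<mu> * (x $ (2*m) + y $ (2*m))"
    using A y first[of y x] by simp
  also have "\<dots> = (?a \<bullet> k + \<mu> * x $ (2*m)) + (?b \<bullet> k + \<mu> * y $ (2*m))"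
    using k by (simp add: add_scalar_prod_distrib[of _ "2*m"] algebra_simps)
  also have "\<dots> = (heis_map m A k \<mu> x + heis_map m A k \<mu> y) $ (2*m)"
    using A heis_map_carrier[OF A] by simp
  finally show "heis_map m A k \<mu> (x + y) $ (2*m)
      = (heis_map m A k \<mu> x + heis_map m A k \<mu> y) $ (2*m)" .
qed (use A heis_map_carrier[OF A] in simp_all)

lemma heis_map_smult:
  assumes A: "A \<in> carrier_mat (2*m) (2*m)" and k: "k \<in> carrier_vec (2*m)"
    and x: "x \<in> carrier_vec (2*m+1)"
  shows "heis_map m A k \<mu> (c \<cdot>\<^sub>v x) = c \<cdot>\<^sub>v heis_map m A k \<mu> x"
proof (rule heis_vec_eqI[where m = m])
  have first: "vec_first (c \<cdot>\<^sub>v v) (2*m) = c \<cdot>\<^sub>v vec_first v (2*m)"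
    if "v \<in> carrier_vec (2*m+1)" for v :: "'a vec"
    using that by (intro eq_vecI) (auto simp: vec_first_def)
  show "vec_first (heis_map m A k \<mu> (c \<cdot>\<^sub>v x)) (2*m)
      = vec_first (c \<cdot>\<^sub>v heis_map m A k \<mu> x) (2*m)"
    using A x first[OF x] first[OF heis_map_carrier[OF A]]
    by (simp add: mult_mat_vec[of _ "2*m" "2*m"])
  show "heis_map m A k \<mu> (c \<cdot>\<^sub>v x) $ (2*m) = (c \<cdot>\<^sub>v heis_map m A k \<mu> x) $ (2*m)"
    using A k x first[OF x] by (simp add: distrib_left mult.left_commute)
qed (use A heis_map_carrier[OF A] in simp_all)

lemma heis_map_central:
  assumes A: "A \<in> carrier_mat (2*m) (2*m)" and k: "k \<in> carrier_vec (2*m)"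
  shows "heis_map m A k \<mu> (c \<cdot>\<^sub>v unit_vec (2*m+1) (2*m)) = (\<mu> * c) \<cdot>\<^sub>v unit_vec (2*m+1) (2*m)"
proof (rule heis_vec_eqI[where m = m])
  have z: "vec_first (d \<cdot>\<^sub>v unit_vec (2*m+1) (2*m)) (2*m) = 0\<^sub>v (2*m)" for d :: 'a
    by (intro eq_vecI) (auto simp: vec_first_def)
  have "transpose_mat A *\<^sub>v 0\<^sub>v (2*m) = 0\<^sub>v (2*m)"
    using A by (intro mult_mat_vec_zero) simp
  then show "vec_first (heis_map m A k \<mu> (c \<cdot>\<^sub>v unit_vec (2*m+1) (2*m))) (2*m)
      = vec_first ((\<mu> * c) \<cdot>\<^sub>v unit_vec (2*m+1) (2*m)) (2*m)"
    unfolding vec_first_heis_map[OF A] z .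
  show "heis_map m A k \<mu> (c \<cdot>\<^sub>v unit_vec (2*m+1) (2*m)) $ (2*m)
      = ((\<mu> * c) \<cdot>\<^sub>v unit_vec (2*m+1) (2*m)) $ (2*m)"
    unfolding heis_map_last[OF A] z using k by simp
qed (rule heis_map_carrier[OF A], simp)

lemma heis_map_comp:
  assumes A: "A \<in> carrier_mat (2*m) (2*m)" and A': "A' \<in> carrier_mat (2*m) (2*m)"
    and k: "k \<in> carrier_vec (2*m)" and k': "k' \<in> carrier_vec (2*m)"
  shows "heis_map m A k \<mu> (heis_map m A' k' \<mu>' x)
    = heis_map m (A' * A) (A' *\<^sub>v k + \<mu> \<cdot>\<^sub>v k') (\<mu> * \<mu>') x"
proof (rule heis_vec_eqI[where m = m])
  let ?a = "vec_first x (2*m)"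
  have "transpose_mat (A' * A) = transpose_mat A * transpose_mat A'" by (rule transpose_mult[OF A' A])
  then show "vec_first (heis_map m A k \<mu> (heis_map m A' k' \<mu>' x)) (2*m)
      = vec_first (heis_map m (A' * A) (A' *\<^sub>v k + \<mu> \<cdot>\<^sub>v k') (\<mu> * \<mu>') x) (2*m)"
    using A A' by simp
  have "heis_map m A k \<mu> (heis_map m A' k' \<mu>' x) $ (2*m)
      = (transpose_mat A' *\<^sub>v ?a) \<bullet> k + \<mu> * (?a \<bullet> k' + \<mu>' * x $ (2*m))"
    using A A' by simp
  also have "(transpose_mat A' *\<^sub>v ?a) \<bullet> k = ?a \<bullet> (A' *\<^sub>v k)"
    by (rule transpose_vec_mult_scalar[OF A' k]) simp
  also have "?a \<bullet> (A' *\<^sub>v k) + \<mu> * (?a \<bullet> k' + \<mu>' * x $ (2*m))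
      = ?a \<bullet> (A' *\<^sub>v k + \<mu> \<cdot>\<^sub>v k') + (\<mu> * \<mu>') * x $ (2*m)"
  proof -
    have "?a \<bullet> (A' *\<^sub>v k + \<mu> \<cdot>\<^sub>v k') = ?a \<bullet> (A' *\<^sub>v k) + \<mu> * (?a \<bullet> k')"
      using A' k k' by (simp add: scalar_prod_add_distrib[of _ "2*m"])
    then show ?thesis by (simp add: algebra_simps)
  qed
  also have "\<dots> = heis_map m (A' * A) (A' *\<^sub>v k + \<mu> \<cdot>\<^sub>v k') (\<mu> * \<mu>') x $ (2*m)"
    using A A' by simp
  finally show "heis_map m A k \<mu> (heis_map m A' k' \<mu>' x) $ (2*m)
      = heis_map m (A' * A) (A' *\<^sub>v k + \<mu> \<cdot>\<^sub>v k') (\<mu> * \<mu>') x $ (2*m)" .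
qed (use A A' in \<open>simp_all add: carrier_dim_vec\<close>)

lemma heis_map_id:
  assumes "x \<in> carrier_vec (2*m+1)"
  shows "heis_map m (1\<^sub>m (2*m)) (0\<^sub>v (2*m)) 1 x = x"
proof (rule heis_vec_eqI[where m = m])
  have I: "1\<^sub>m (2*m) \<in> carrier_mat (2*m) (2*m)" by simp
  show "heis_map m (1\<^sub>m (2*m)) (0\<^sub>v (2*m)) 1 x \<in> carrier_vec (2*m+1)"
    by (rule heis_map_carrier[OF I])
  show "vec_first (heis_map m (1\<^sub>m (2*m)) (0\<^sub>v (2*m)) 1 x) (2*m) = vec_first x (2*m)"
    unfolding vec_first_heis_map[OF I] by simp
  show "heis_map m (1\<^sub>m (2*m)) (0\<^sub>v (2*m)) 1 x $ (2*m) = x $ (2*m)"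
    unfolding heis_map_last[OF I] by simp
qed (rule assms)

lemma bij_heis_map:
  assumes A: "A \<in> carrier_mat (2*m) (2*m)" and inv: "invertible_mat A"
    and k: "k \<in> carrier_vec (2*m)" and \<mu>: "\<mu> \<noteq> 0"
  shows "bij_betw (heis_map m A k \<mu>) (carrier_vec (2*m+1)) (carrier_vec (2*m+1))"
proof -
  obtain B where B: "B \<in> carrier_mat (2*m) (2*m)"
    and AB: "A * B = 1\<^sub>m (2*m)" and BA: "B * A = 1\<^sub>m (2*m)"
    by (rule invertible_matE[OF A inv])
  define k' where "k' = (- 1 / \<mu>) \<cdot>\<^sub>v (B *\<^sub>v k)"
  have k': "k' \<in> carrier_vec (2*m)" using B k by (simp add: k'_def)
  have "A *\<^sub>v k' = (- 1 / \<mu>) \<cdot>\<^sub>v ((A * B) *\<^sub>v k)"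
    using A B k by (simp add: k'_def mult_mat_vec[OF A])
  then have Ak': "A *\<^sub>v k' + (1 / \<mu>) \<cdot>\<^sub>v k = 0\<^sub>v (2*m)"
    using k unfolding AB by (intro eq_vecI) auto
  have Bk: "B *\<^sub>v k + \<mu> \<cdot>\<^sub>v k' = 0\<^sub>v (2*m)"
    using B k \<mu> by (intro eq_vecI) (auto simp: k'_def)
  have left: "heis_map m B k' (1 / \<mu>) (heis_map m A k \<mu> x) = x"
    if x: "x \<in> carrier_vec (2*m+1)" for x
  proof -
    have "heis_map m B k' (1 / \<mu>) (heis_map m A k \<mu> x)
        = heis_map m (A * B) (A *\<^sub>v k' + (1 / \<mu>) \<cdot>\<^sub>v k) (1 / \<mu> * \<mu>) x"
      by (rule heis_map_comp[OF B A k' k])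
    also have "\<dots> = x" unfolding AB Ak' using \<mu> heis_map_id[OF x] by simp
    finally show ?thesis .
  qed
  have right: "heis_map m A k \<mu> (heis_map m B k' (1 / \<mu>) x) = x"
    if x: "x \<in> carrier_vec (2*m+1)" for x
  proof -
    have "heis_map m A k \<mu> (heis_map m B k' (1 / \<mu>) x)
        = heis_map m (B * A) (B *\<^sub>v k + \<mu> \<cdot>\<^sub>v k') (\<mu> * (1 / \<mu>)) x"
      by (rule heis_map_comp[OF A B k k'])
    also have "\<dots> = x" unfolding BA Bk using \<mu> heis_map_id[OF x] by simp
    finally show ?thesis .
  qed
  show ?thesis
    by (rule bij_betw_byWitness[where f' = "heis_map m B k' (1 / \<mu>)"])
      (use left right heis_map_carrier[OF A] heis_map_carrier[OF B] in auto)
qed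

lemma symp_form_heis_map:
  assumes A: "A \<in> carrier_mat (2*m) (2*m)"
  shows "symp_form m (heis_map m A k \<mu> x) (heis_map m A k \<mu> y)
    = vec_first x (2*m) \<bullet> ((A * symp_J m * transpose_mat A) *\<^sub>v vec_first y (2*m))"
proof -
  let ?a = "vec_first x (2*m)" and ?b = "vec_first y (2*m)"
  note J = symp_J_carrier[of m]
  have AT: "transpose_mat A \<in> carrier_mat (2*m) (2*m)" using A by simp
  have "symp_form m (heis_map m A k \<mu> x) (heis_map m A k \<mu> y)
      = symp_form m (transpose_mat A *\<^sub>v ?a) (transpose_mat A *\<^sub>v ?b)"
    by (subst symp_form_vec_first) (simp add: A)
  also have "\<dots> = (transpose_mat A *\<^sub>v ?a) \<bullet> (symp_J m *\<^sub>v (transpose_mat A *\<^sub>v ?b))"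
    using AT by (intro scalar_prod_symp_J[symmetric]) auto
  also have "\<dots> = ?a \<bullet> (A *\<^sub>v (symp_J m *\<^sub>v (transpose_mat A *\<^sub>v ?b)))"
    using A J AT by (intro transpose_vec_mult_scalar) (auto simp: carrier_dim_vec)
  also have "A *\<^sub>v (symp_J m *\<^sub>v (transpose_mat A *\<^sub>v ?b))
      = (A * symp_J m * transpose_mat A) *\<^sub>v ?b"
  proof -
    have b: "transpose_mat A *\<^sub>v ?b \<in> carrier_vec (2*m)" using AT by simp
    have "(A * symp_J m * transpose_mat A) *\<^sub>v ?b
        = (A * symp_J m) *\<^sub>v (transpose_mat A *\<^sub>v ?b)"
      by (rule assoc_mult_mat_vec[OF mult_carrier_mat[OF A J] AT]) simp
    also have "\<dots> = A *\<^sub>v (symp_J m *\<^sub>v (transpose_mat A *\<^sub>v ?b))"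
      by (rule assoc_mult_mat_vec[OF A J b])
    finally show ?thesis by simp
  qed
  finally show ?thesis .
qed

lemma heis_map_bracket_iff:
  assumes A: "A \<in> carrier_mat (2*m) (2*m)" and k: "k \<in> carrier_vec (2*m)"
  shows "(\<forall>x\<in>carrier_vec (2*m+1). \<forall>y\<in>carrier_vec (2*m+1).
      heis_map m A k \<mu> (heis_bracket m x y) = heis_bracket m (heis_map m A k \<mu> x) (heis_map m A k \<mu> y))
    \<longleftrightarrow> A * symp_J m * transpose_mat A = \<mu> \<cdot>\<^sub>m symp_J m"
    (is "?preserves \<longleftrightarrow> ?M = ?N")
proof -
  let ?same = "\<lambda>a b. a \<bullet> (?N *\<^sub>v b) = a \<bullet> (?M *\<^sub>v b)"
  note J = symp_J_carrier[of m]
  have AT: "transpose_mat A \<in> carrier_mat (2*m) (2*m)" using A by simp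
  have M: "?M \<in> carrier_mat (2*m) (2*m)" using mult_carrier_mat[OF mult_carrier_mat[OF A J] AT] .
  have N: "?N \<in> carrier_mat (2*m) (2*m)" using smult_carrier_mat[OF J] .
  have pointwise: "heis_map m A k \<mu> (heis_bracket m x y)
      = heis_bracket m (heis_map m A k \<mu> x) (heis_map m A k \<mu> y)
      \<longleftrightarrow> ?same (vec_first x (2*m)) (vec_first y (2*m))" for x y
  proof -
    have "\<mu> * symp_form m x y = vec_first x (2*m) \<bullet> (?N *\<^sub>v vec_first y (2*m))"
      using J by (subst symp_form_vec_first) (simp add: scalar_prod_symp_J smult_mat_mult_mat_vec[OF J])
    then show ?thesis
      unfolding heis_bracket_eq heis_map_central[OF A k] symp_form_heis_map[OF A]
      by (simp add: smult_unit_vec_eq_iff)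
  qed
  have "?preserves \<longleftrightarrow> (\<forall>a\<in>carrier_vec (2*m). \<forall>b\<in>carrier_vec (2*m). ?same a b)"
    using ball_carrier_vec_split_last[of "2*m"
        "\<lambda>a _. \<forall>y\<in>carrier_vec (2*m+1). ?same a (vec_first y (2*m))"]
      ball_carrier_vec_split_last[of "2*m" "\<lambda>b _. ?same a b" for a]
    by (simp add: pointwise)
  also have "\<dots> \<longleftrightarrow> ?M = ?N"
    using mat_eqI_scalar_prod[OF M N] by auto
  finally show ?thesis .
qed

lemma heis_map_sq_iff:
  assumes char: "CHAR('a) = 2" and A: "A \<in> carrier_mat (2*m) (2*m)"
    and k: "k \<in> carrier_vec (2*m)" and \<mu>: "\<mu> \<noteq> (0::'a::field)"
  shows "(\<forall>x\<in>carrier_vec (2*m+1).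
      heis_map m A k \<mu> (heis_sq m lam x) = heis_sq m lam' (heis_map m A k \<mu> x))
    \<longleftrightarrow> quad_form_compatible m lam lam' A k \<mu> \<and> lam $ (2*m) = \<mu> * lam' $ (2*m)"
    (is "?preserves \<longleftrightarrow> ?Q \<and> ?L")
proof -
  define E where "E a t \<longleftrightarrow> \<mu> * (quad_form m lam a + lam $ (2*m) * t^2)
      = quad_form m lam' (transpose_mat A *\<^sub>v a) + lam' $ (2*m) * (a \<bullet> k)^2
        + lam' $ (2*m) * (\<mu> * t)^2"
    for a t
  have "heis_map m A k \<mu> (heis_sq m lam x) = heis_sq m lam' (heis_map m A k \<mu> x)
      \<longleftrightarrow> E (vec_first x (2*m)) (x $ (2*m))" for x
    unfolding heis_sq_eq heis_map_central[OF A k] E_def vec_first_heis_map[OF A] heis_map_last[OF A]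
      power2_sum_char_2[OF char] by (simp add: smult_unit_vec_eq_iff distrib_left add.assoc)
  then have "?preserves \<longleftrightarrow> (\<forall>a\<in>carrier_vec (2*m). \<forall>t. E a t)"
    using ball_carrier_vec_split_last[of "2*m" E] by simp
  also have "\<dots> \<longleftrightarrow> ?Q \<and> ?L"
  proof
    assume all: "\<forall>a\<in>carrier_vec (2*m). \<forall>t. E a t"
    then have "E a 0" if "a \<in> carrier_vec (2*m)" for a using that by blast
    then have ?Q unfolding quad_form_compatible_def E_def by simp
    moreover have "E (0\<^sub>v (2*m)) 1" using all by simp
    moreover have "transpose_mat A *\<^sub>v 0\<^sub>v (2*m) = 0\<^sub>v (2*m)"
      using A by (intro mult_mat_vec_zero) simp
    ultimately have "?Q \<and> lam $ (2*m) = lam' $ (2*m) * \<mu>"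
      using k \<mu> by (simp add: E_def power2_eq_square)
    then show "?Q \<and> ?L" by (simp add: mult.commute)
  next
    assume "?Q \<and> ?L"
    then show "\<forall>a\<in>carrier_vec (2*m). \<forall>t. E a t"
      unfolding quad_form_compatible_def by (simp add: E_def power2_eq_square algebra_simps)
  qed
  finally show ?thesis .
qed

lemma restricted_iso_heis_map_iff:
  assumes char: "CHAR('a) = 2" and A: "A \<in> carrier_mat (2*m) (2*m)"
    and k: "k \<in> carrier_vec (2*m)" and \<mu>: "\<mu> \<noteq> (0::'a::field)"
  shows "restricted_iso m lam lam' (heis_map m A k \<mu>) \<longleftrightarrow>
    invertible_mat A \<and> A * symp_J m * transpose_mat A = \<mu> \<cdot>\<^sub>m symp_J m \<and>
    quad_form_compatible m lam lam' A k \<mu> \<and> lam $ (2*m) = \<mu> * lam' $ (2*m)"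
    (is "?iso \<longleftrightarrow> invertible_mat A \<and> ?AJ \<and> ?Q \<and> ?L")
proof
  assume ?iso
  then have AJ: ?AJ and "?Q \<and> ?L"
    unfolding restricted_iso_def heis_map_bracket_iff[OF A k, symmetric]
      heis_map_sq_iff[OF char A k \<mu>, symmetric] by auto
  moreover have "(det A)^2 \<noteq> 0"
    unfolding det_power2_if_conformally_symplectic[OF A AJ] using \<mu> by simp
  then have "invertible_mat A" using invertible_mat_iff_det_nonzero[OF A] by simp
  ultimately show "invertible_mat A \<and> ?AJ \<and> ?Q \<and> ?L" by blast
next
  assume "invertible_mat A \<and> ?AJ \<and> ?Q \<and> ?L"
  then show ?iso
    unfolding restricted_iso_def heis_map_bracket_iff[OF A k] heis_map_sq_iff[OF char A k \<mu>]
    using bij_heis_map[OF A _ k \<mu>] heis_map_add[OF A k] heis_map_smult[OF A k] by blast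
qed

section \<open>Every restricted isomorphism is a block map\<close>

lemma restricted_iso_centre:
  fixes \<Psi> :: "'a::field vec \<Rightarrow> 'a vec"
  assumes iso: "restricted_iso m lam lam' \<Psi>"
  obtains \<mu> where "\<mu> \<noteq> 0" "\<Psi> (unit_vec (2*m+1) (2*m)) = \<mu> \<cdot>\<^sub>v unit_vec (2*m+1) (2*m)"
proof -
  let ?n = "2*m+1" and ?z = "unit_vec (2*m+1) (2*m) :: 'a vec"
  have bij: "bij_betw \<Psi> (carrier_vec ?n) (carrier_vec ?n)"
    and smult: "\<forall>c. \<forall>x\<in>carrier_vec ?n. \<Psi> (c \<cdot>\<^sub>v x) = c \<cdot>\<^sub>v \<Psi> x"
    and bracket: "\<forall>x\<in>carrier_vec ?n. \<forall>y\<in>carrier_vec ?n.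
      \<Psi> (heis_bracket m x y) = heis_bracket m (\<Psi> x) (\<Psi> y)"
    using iso unfolding restricted_iso_def by auto
  have z: "?z \<in> carrier_vec ?n" by simp
  define w where "w = \<Psi> ?z"
  have w: "w \<in> carrier_vec ?n" unfolding w_def using bij_betwE[OF bij] z by blast
  have "\<Psi> (0 \<cdot>\<^sub>v ?z) = 0 \<cdot>\<^sub>v w" using smult z unfolding w_def by blast
  also have "0 \<cdot>\<^sub>v w = 0 \<cdot>\<^sub>v ?z" using w by (intro eq_vecI) auto
  finally have zero: "\<Psi> (0 \<cdot>\<^sub>v ?z) = 0 \<cdot>\<^sub>v ?z" .
  have orth: "symp_form m w (unit_vec ?n j) = 0" if j: "j < 2*m" for j
  proof -
    have "unit_vec ?n j \<in> \<Psi> ` carrier_vec ?n" using bij j by (simp add: bij_betw_def)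
    then obtain y where Py: "unit_vec ?n j = \<Psi> y" and y: "y \<in> carrier_vec ?n" by (rule imageE)
    have "symp_form m ?z y = 0" unfolding symp_form_def by (simp add: sum.neutral)
    have "symp_form m w (unit_vec ?n j) \<cdot>\<^sub>v ?z = heis_bracket m (\<Psi> ?z) (\<Psi> y)"
      unfolding w_def Py heis_bracket_eq ..
    also have "\<dots> = \<Psi> (heis_bracket m ?z y)" using bracket z y by simp
    also have "\<dots> = \<Psi> (0 \<cdot>\<^sub>v ?z)" unfolding heis_bracket_eq \<open>symp_form m ?z y = 0\<close> ..
    finally have "symp_form m w (unit_vec ?n j) \<cdot>\<^sub>v ?z = \<Psi> (0 \<cdot>\<^sub>v ?z)" .
    then show ?thesis unfolding zero by (simp add: smult_unit_vec_eq_iff)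
  qed
  have "w $ i = 0" if "i < 2*m" for i
    using symp_form_nondegenerate[of m ?n, OF _ orth that] by simp
  then have wz: "w = w $ (2*m) \<cdot>\<^sub>v ?z"
    using w by (intro eq_vecI) (auto simp: less_Suc_eq)
  moreover have "w $ (2*m) \<noteq> 0"
  proof
    assume "w $ (2*m) = 0"
    then have eq: "\<Psi> ?z = \<Psi> (0 \<cdot>\<^sub>v ?z)" using wz zero unfolding w_def by simp
    have "?z = 0 \<cdot>\<^sub>v ?z" using inj_onD[OF bij_betw_imp_inj_on[OF bij] eq z] by simp
    then show False using smult_unit_vec_eq_iff[of "2*m" ?n "1::'a" 0] by simp
  qed
  ultimately show ?thesis using that unfolding w_def by blast
qed

lemma restricted_iso_eq_heis_map:
  fixes \<Psi> :: "'a::field vec \<Rightarrow> 'a vec"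
  assumes iso: "restricted_iso m lam lam' \<Psi>"
  obtains A k \<mu> where "A \<in> carrier_mat (2*m) (2*m)" "k \<in> carrier_vec (2*m)" "\<mu> \<noteq> 0"
    "\<forall>x\<in>carrier_vec (2*m+1). \<Psi> x = heis_map m A k \<mu> x"
proof -
  let ?n = "2*m+1" and ?e = "\<lambda>i. unit_vec (2*m+1) i :: 'a vec"
  obtain \<mu> where \<mu>: "\<mu> \<noteq> 0" and centre: "\<Psi> (?e (2*m)) = \<mu> \<cdot>\<^sub>v ?e (2*m)"
    using iso by (rule restricted_iso_centre)
  have add: "\<forall>x\<in>carrier_vec ?n. \<forall>y\<in>carrier_vec ?n. \<Psi> (x + y) = \<Psi> x + \<Psi> y"
    and smult: "\<forall>c. \<forall>x\<in>carrier_vec ?n. \<Psi> (c \<cdot>\<^sub>v x) = c \<cdot>\<^sub>v \<Psi> x"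
    and bij: "bij_betw \<Psi> (carrier_vec ?n) (carrier_vec ?n)"
    using iso unfolding restricted_iso_def by auto
  have carrier: "\<forall>x\<in>carrier_vec ?n. \<Psi> x \<in> carrier_vec ?n" using bij_betwE[OF bij] .
  define A where "A = mat (2*m) (2*m) (\<lambda>(i, j). \<Psi> (?e i) $ j)"
  define k where "k = vec (2*m) (\<lambda>i. \<Psi> (?e i) $ (2*m))"
  have A: "A \<in> carrier_mat (2*m) (2*m)" and k: "k \<in> carrier_vec (2*m)"
    unfolding A_def k_def by simp_all
  have "\<Psi> x = heis_map m A k \<mu> x" if x: "x \<in> carrier_vec ?n" for x
  proof (rule heis_vec_eqI[where m = m])
    have "{..<?n} = insert (2*m) {..<2*m}" by auto
    then have coord: "\<Psi> x $ j
        = (\<Sum>i<2*m. x $ i * \<Psi> (?e i) $ j) + x $ (2*m) * (\<mu> \<cdot>\<^sub>v ?e (2*m)) $ j"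
      if "j < ?n" for j
      unfolding linear_map_vec_expansion[OF add smult carrier x] centre[symmetric] using that by simp
    show "vec_first (\<Psi> x) (2*m) = vec_first (heis_map m A k \<mu> x) (2*m)"
      unfolding vec_first_heis_map[OF A] using A coord
      by (intro eq_vecI) (auto simp: vec_first_def A_def scalar_prod_def mult.commute intro!: sum.cong)
    show "\<Psi> x $ (2*m) = heis_map m A k \<mu> x $ (2*m)"
      unfolding heis_map_last[OF A] using coord[of "2*m"]
      by (simp add: k_def vec_first_def scalar_prod_def atLeast0LessThan mult.commute)
  qed (use x carrier heis_map_carrier[OF A] in blast)+
  with A k \<mu> that show ?thesis by blast
qed

lemma restricted_iso_cong:
  fixes \<Psi> \<Phi> :: "'a::field vec \<Rightarrow> 'a vec"
  assumes iso: "restricted_iso m lam lam' \<Psi>"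
    and eq: "\<And>x. x \<in> carrier_vec (2*m+1) \<Longrightarrow> \<Psi> x = \<Phi> x"
  shows "restricted_iso m lam lam' \<Phi>"
  unfolding restricted_iso_def
proof (intro conjI ballI allI)
  show "bij_betw \<Phi> (carrier_vec (2*m+1)) (carrier_vec (2*m+1))"
    using iso bij_betw_cong[of "carrier_vec (2*m+1)" \<Psi> \<Phi> "carrier_vec (2*m+1)"] eq
    unfolding restricted_iso_def by blast
next
  fix x y :: "'a vec" assume x: "x \<in> carrier_vec (2*m+1)" and y: "y \<in> carrier_vec (2*m+1)"
  then show "\<Phi> (x + y) = \<Phi> x + \<Phi> y"
    using iso eq[of "x + y"] eq[OF x] eq[OF y] unfolding restricted_iso_def by auto
next
  fix c and x :: "'a vec" assume x: "x \<in> carrier_vec (2*m+1)"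
  then show "\<Phi> (c \<cdot>\<^sub>v x) = c \<cdot>\<^sub>v \<Phi> x"
    using iso eq[of "c \<cdot>\<^sub>v x"] eq[OF x] unfolding restricted_iso_def by auto
next
  fix x y :: "'a vec" assume x: "x \<in> carrier_vec (2*m+1)" and y: "y \<in> carrier_vec (2*m+1)"
  have "heis_bracket m x y \<in> carrier_vec (2*m+1)" unfolding heis_bracket_def by simp
  then have "\<Phi> (heis_bracket m x y) = \<Psi> (heis_bracket m x y)" by (simp add: eq)
  also have "\<dots> = heis_bracket m (\<Psi> x) (\<Psi> y)" using iso x y unfolding restricted_iso_def by blast
  finally show "\<Phi> (heis_bracket m x y) = heis_bracket m (\<Phi> x) (\<Phi> y)"
    using eq[OF x] eq[OF y] by simp
next
  fix x :: "'a vec" assume x: "x \<in> carrier_vec (2*m+1)"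
  have "heis_sq m lam x \<in> carrier_vec (2*m+1)" unfolding heis_sq_def by simp
  then have "\<Phi> (heis_sq m lam x) = \<Psi> (heis_sq m lam x)" by (simp add: eq)
  also have "\<dots> = heis_sq m lam' (\<Psi> x)" using iso x unfolding restricted_iso_def by blast
  finally show "\<Phi> (heis_sq m lam x) = heis_sq m lam' (\<Phi> x)" using eq[OF x] by simp
qed

lemma restricted_isomorphic_iff:
  fixes lam lam' :: "'a::field vec"
  assumes char: "CHAR('a) = 2" and m: "m \<ge> 1"
  shows "restricted_isomorphic m lam lam' \<longleftrightarrow>
    (\<exists>A k \<mu>. A \<in> carrier_mat (2*m) (2*m) \<and> invertible_mat A \<and>
       k \<in> carrier_vec (2*m) \<and> (det A)^2 = \<mu>^(2*m) \<and>
       A * symp_J m * transpose_mat A = \<mu> \<cdot>\<^sub>m symp_J m \<and>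
       quad_form_compatible m lam lam' A k \<mu> \<and>
       lam $ (2*m) = \<mu> * lam' $ (2*m))"
  (is "_ \<longleftrightarrow> ?rhs")
proof
  assume "restricted_isomorphic m lam lam'"
  then obtain \<Psi> where iso: "restricted_iso m lam lam' \<Psi>"
    unfolding restricted_isomorphic_def by blast
  then obtain A k \<mu> where A: "A \<in> carrier_mat (2*m) (2*m)" and k: "k \<in> carrier_vec (2*m)"
    and \<mu>: "\<mu> \<noteq> 0" and eq: "\<forall>x\<in>carrier_vec (2*m+1). \<Psi> x = heis_map m A k \<mu> x"
    by (rule restricted_iso_eq_heis_map)
  have "restricted_iso m lam lam' (heis_map m A k \<mu>)"
    by (rule restricted_iso_cong[OF iso]) (use eq in blast)
  then have conds: "invertible_mat A" "A * symp_J m * transpose_mat A = \<mu> \<cdot>\<^sub>m symp_J m"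
    "quad_form_compatible m lam lam' A k \<mu>" "lam $ (2*m) = \<mu> * lam' $ (2*m)"
    unfolding restricted_iso_heis_map_iff[OF char A k \<mu>] by auto
  moreover have "(det A)^2 = \<mu>^(2*m)" by (rule det_power2_if_conformally_symplectic[OF A conds(2)])
  ultimately show ?rhs using A k by blast
next
  assume ?rhs
  then obtain A k \<mu> where A: "A \<in> carrier_mat (2*m) (2*m)" and inv: "invertible_mat A"
    and k: "k \<in> carrier_vec (2*m)" and det: "(det A)^2 = \<mu>^(2*m)"
    and conds: "A * symp_J m * transpose_mat A = \<mu> \<cdot>\<^sub>m symp_J m"
      "quad_form_compatible m lam lam' A k \<mu>" "lam $ (2*m) = \<mu> * lam' $ (2*m)"
    by blast
  have "\<mu> \<noteq> 0"
  proof
    assume "\<mu> = 0"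
    then have "(det A)^2 = 0" using det m by simp
    then show False using inv invertible_mat_iff_det_nonzero[OF A] by simp
  qed
  then have "restricted_iso m lam lam' (heis_map m A k \<mu>)"
    using restricted_iso_heis_map_iff[OF char A k] inv conds by blast
  then show "restricted_isomorphic m lam lam'" unfolding restricted_isomorphic_def by blast
qed

theorem theorem3p2:
  fixes m :: nat and lam lam' :: "'a::field vec"
  assumes "CHAR('a) = 2"
    and "m \<ge> 1"
    and "lam \<in> carrier_vec (2*m+1)" and "lam' \<in> carrier_vec (2*m+1)"
  shows "restricted_isomorphic m lam lam' \<longleftrightarrow>
    (\<exists>A k \<mu>. A \<in> carrier_mat (2*m) (2*m) \<and> invertible_mat A \<and>
       k \<in> carrier_vec (2*m) \<and> (det A)^2 = \<mu>^(2*m) \<and>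
       A * symp_J m * transpose_mat A = \<mu> \<cdot>\<^sub>m symp_J m \<and>
       (\<forall>a\<in>carrier_vec (2*m).
          let b = transpose_mat A *\<^sub>v a in
          \<mu> * (a \<bullet> (diag_lam m lam *\<^sub>v a)) + \<mu> * (vec_first a m \<bullet> vec_last a m)
          = b \<bullet> (diag_lam m lam' *\<^sub>v b) + vec_first b m \<bullet> vec_last b m
            + lam' $ (2*m) * (a \<bullet> k)^2) \<and>
       lam $ (2*m) = \<mu> * lam' $ (2*m))"
  unfolding restricted_isomorphic_iff[OF assms(1,2)] quad_form_compatible_def
  by (simp add: quad_form_def Let_def distrib_left)

end
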